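(* Let $k\ge2$, $\sigma_i=\frac{i(k-i)}2$ for $i=0,\dots,k$, and $j\in\{1,\dots,k\}$. Let $M_k^j$ be the $(k-j+1)\times(k-j+1)$ tridiagonal matrix whose upper-diagonal entries are $(M_k^j)_{m,m+1}=\sigma_m$ ($m=1,\dots,k-j$), whose lower-diagonal entries are $(M_k^j)_{m+1,m}=\sigma_{j+m-1}$ ($m=1,\dots,k-j$), whose diagonal entries are $(M_k^j)_{m,m}=-(\sigma_{m-1}+\sigma_{j+m-1})$ ($m=1,\dots,k-j+1$) (so that each column sums to zero), and whose other entries vanish. Then $M_k^j$ is similar to the diagonal matrix $$\mathrm{diag}\big(0,\,-j,\,-(j+(j+1)),\,-(j+(j+1)+(j+2)),\,\dots,\,-(j+(j+1)+\dots+(k-1))\big).$$ *)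

theory Defs
  imports Complex_Main "Jordan_Normal_Form.Matrix"
begin

definition sig :: "nat \<Rightarrow> nat \<Rightarrow> real" where
  "sig k i = real i * (real k - real i) / 2"

text \<open>The (k-j+1)x(k-j+1) tridiagonal matrix M_k^j, with 0-based indices:
  entry (r,r+1) = sigma_(r+1), entry (r+1,r) = sigma_(j+r),
  entry (r,r) = -(sigma_r + sigma_(j+r)), all others 0.\<close>
definition Mkj :: "nat \<Rightarrow> nat \<Rightarrow> real mat" where
  "Mkj k j = mat (k - j + 1) (k - j + 1) (\<lambda>(r, c).
     if c = r + 1 then sig k (r + 1)
     else if r = c + 1 then sig k (j + c)
     else if r = c then - (sig k r + sig k (j + r))
     else 0)"

definition Dkj :: "nat \<Rightarrow> nat \<Rightarrow> real mat" where
  "Dkj k j = mat (k - j + 1) (k - j + 1) (\<lambda>(r, c).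
     if r = c then - real (\<Sum>t\<in>{j..<j + r}. t) else 0)"

end

theory Submission
  imports Defs "Jordan_Normal_Form.Determinant"
begin

text \<open>Read row vectors as functions on the states 0, ..., k - j. Since the columns of M sum
  to zero, multiplying the row vector of values of f by M applies the birth-death generator
  (L f)(x) = s(x) (f(x-1) - f(x)) + s(j+x) (f(x+1) - f(x)), where s(x) = x(k-x)/2 vanishes at
  both ends of the state space. As s is quadratic, L maps the falling factorial of degree i
  to l(i) times itself plus a multiple of the one of degree i - 1, with
  l(i) = -(j + (j+1) + ... + (j+i-1)). The matrix of falling factorials evaluated at the states
  is upper triangular with diagonal entries i!, so it conjugates M to a lower bidiagonal matrix
  with diagonal l. The values l(i) are pairwise distinct for j >= 1, and a lower bidiagonal
  matrix with distinct diagonal entries is diagonalised by a unit lower triangular matrix.\<close>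

lemma similar_mat_if_intertwined:
  fixes P M N :: "'a::field mat"
  assumes P: "P \<in> carrier_mat n n" and M: "M \<in> carrier_mat n n" and N: "N \<in> carrier_mat n n"
    and det: "det P \<noteq> 0" and PM: "P * M = N * P"
  shows "similar_mat M N"
proof -
  obtain P' where P': "P' \<in> carrier_mat n n" and P'P: "P' * P = 1\<^sub>m n" and PP': "P * P' = 1\<^sub>m n"
    using det_non_zero_imp_unit[OF P det, of "()"] unfolding Units_def ring_mat_def by auto
  have "M = (P' * P) * M" using P'P M by simp
  also have "\<dots> = P' * (N * P)" using P' P M by (simp add: PM)
  also have "\<dots> = P' * N * P" using P' P N by simp
  finally show ?thesis
    using P P' M N P'P PP' by (intro similar_matI[of M N P' P n]) auto
qed

definition lower_bidiag_mat :: "nat \<Rightarrow> (nat \<Rightarrow> 'a::zero) \<Rightarrow> (nat \<Rightarrow> 'a) \<Rightarrow> 'a mat" where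
  "lower_bidiag_mat n a b = mat n n (\<lambda>(i, s). if s = i then a i else if s + 1 = i then b i else 0)"

lemma lower_bidiag_mat_carrier [simp]: "lower_bidiag_mat n a b \<in> carrier_mat n n"
  by (simp add: lower_bidiag_mat_def)

lemma lower_bidiag_mat_mult:
  fixes A :: "'a::semiring_1 mat"
  assumes A: "A \<in> carrier_mat n m"
  shows "lower_bidiag_mat n a b * A
    = mat n m (\<lambda>(i, c). a i * A $$ (i, c) + (if 0 < i then b i * A $$ (i - 1, c) else 0))"
    (is "_ = mat n m ?rhs")
proof (rule eq_matI)
  fix i c assume "i < dim_row (mat n m ?rhs)" and "c < dim_col (mat n m ?rhs)"
  then have i: "i < n" and c: "c < m" by auto
  have "(lower_bidiag_mat n a b * A) $$ (i, c)
      = (\<Sum>s<n. (if s = i then a i * A $$ (s, c) else 0)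
                + (if s = i - 1 then if 0 < i then b i * A $$ (s, c) else 0 else 0))"
    using A i c by (auto simp: lower_bidiag_mat_def scalar_prod_def lessThan_atLeast0 intro!: sum.cong)
  also have "\<dots> = ?rhs (i, c)"
    using i by (simp add: sum.distrib less_imp_diff_less)
  finally show "(lower_bidiag_mat n a b * A) $$ (i, c) = mat n m ?rhs $$ (i, c)"
    using i c by simp
qed (use A in \<open>auto simp: lower_bidiag_mat_def\<close>)

lemma mult_lower_bidiag_mat:
  fixes A :: "'a::semiring_1 mat"
  assumes A: "A \<in> carrier_mat m n"
  shows "A * lower_bidiag_mat n a b
    = mat m n (\<lambda>(d, s). A $$ (d, s) * a s + (if s + 1 < n then A $$ (d, s + 1) * b (s + 1) else 0))"
    (is "_ = mat m n ?rhs")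
proof (rule eq_matI)
  fix d s assume "d < dim_row (mat m n ?rhs)" and "s < dim_col (mat m n ?rhs)"
  then have d: "d < m" and s: "s < n" by auto
  have "(A * lower_bidiag_mat n a b) $$ (d, s)
      = (\<Sum>i<n. (if i = s then A $$ (d, i) * a i else 0)
                + (if i = s + 1 then A $$ (d, i) * b i else 0))"
    using A d s by (auto simp: lower_bidiag_mat_def scalar_prod_def lessThan_atLeast0 intro!: sum.cong)
  also have "\<dots> = ?rhs (d, s)"
    using s by (simp add: sum.distrib)
  finally show "(A * lower_bidiag_mat n a b) $$ (d, s) = mat m n ?rhs $$ (d, s)"
    using d s by simp
qed (use A in \<open>auto simp: lower_bidiag_mat_def\<close>)

text \<open>Row \<open>d\<close> of \<open>bidiag_eigvec_mat\<close> is the left eigenvector for the eigenvalue \<open>a d\<close>,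
  obtained by back substitution from its entry \<open>1\<close> at position \<open>d\<close>.\<close>

definition bidiag_eigvec_coeff :: "(nat \<Rightarrow> 'a::field) \<Rightarrow> (nat \<Rightarrow> 'a) \<Rightarrow> nat \<Rightarrow> nat \<Rightarrow> 'a" where
  "bidiag_eigvec_coeff a b d s = (\<Prod>t\<in>{s<..d}. b t / (a d - a (t - 1)))"

definition bidiag_eigvec_mat :: "nat \<Rightarrow> (nat \<Rightarrow> 'a::field) \<Rightarrow> (nat \<Rightarrow> 'a) \<Rightarrow> 'a mat" where
  "bidiag_eigvec_mat n a b = mat n n (\<lambda>(d, s). if s \<le> d then bidiag_eigvec_coeff a b d s else 0)"

lemma bidiag_eigvec_mat_carrier [simp]: "bidiag_eigvec_mat n a b \<in> carrier_mat n n"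
  by (simp add: bidiag_eigvec_mat_def)

lemma bidiag_eigvec_coeff_self [simp]: "bidiag_eigvec_coeff a b d d = 1"
  by (simp add: bidiag_eigvec_coeff_def)

lemma bidiag_eigvec_coeff_less:
  assumes "s < d"
  shows "bidiag_eigvec_coeff a b d s = b (s + 1) / (a d - a s) * bidiag_eigvec_coeff a b d (s + 1)"
proof -
  have "{s<..d} = insert (Suc s) {Suc s<..d}" using assms by auto
  then show ?thesis unfolding bidiag_eigvec_coeff_def by simp
qed

lemma bidiag_eigvec_mat_mult:
  fixes a b :: "nat \<Rightarrow> 'a::field"
  assumes inj: "inj_on a {..<n}"
  shows "bidiag_eigvec_mat n a b * lower_bidiag_mat n a b = mat_diag n a * bidiag_eigvec_mat n a b"
proof -
  let ?E = "bidiag_eigvec_mat n a b"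
  have "?E $$ (d, s) * a s + (if s + 1 < n then ?E $$ (d, s + 1) * b (s + 1) else 0) = a d * ?E $$ (d, s)"
    if d: "d < n" and s: "s < n" for d s
  proof (cases "s < d")
    case True
    then have "a d \<noteq> a s" using inj d s by (auto dest: inj_onD)
    then show ?thesis
      using True d by (simp add: bidiag_eigvec_mat_def bidiag_eigvec_coeff_less field_simps)
  qed (use d s in \<open>auto simp: bidiag_eigvec_mat_def\<close>)
  then show ?thesis
    unfolding mult_lower_bidiag_mat[OF bidiag_eigvec_mat_carrier]
      mat_diag_mult_left[OF bidiag_eigvec_mat_carrier]
    by auto
qed

lemma det_bidiag_eigvec_mat: "det (bidiag_eigvec_mat n a b) = 1"
proof -
  have "det (bidiag_eigvec_mat n a b) = prod_list (diag_mat (bidiag_eigvec_mat n a b))"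
    by (rule det_lower_triangular[of n]) (auto simp: bidiag_eigvec_mat_def)
  also have "diag_mat (bidiag_eigvec_mat n a b) = replicate n 1"
    by (auto simp: diag_mat_def bidiag_eigvec_mat_def intro: nth_equalityI)
  finally show ?thesis by simp
qed

lemma similar_mat_lower_bidiag_mat_diag:
  fixes a b :: "nat \<Rightarrow> 'a::field"
  assumes "inj_on a {..<n}"
  shows "similar_mat (lower_bidiag_mat n a b) (mat_diag n a)"
  by (rule similar_mat_if_intertwined[OF bidiag_eigvec_mat_carrier _ _ _ bidiag_eigvec_mat_mult])
     (use assms in \<open>simp_all add: det_bidiag_eigvec_mat\<close>)

definition falling_fact :: "'a::comm_ring_1 \<Rightarrow> nat \<Rightarrow> 'a" where
  "falling_fact x i = (\<Prod>t<i. x - of_nat t)"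

lemma falling_fact_0 [simp]: "falling_fact x 0 = 1"
  by (simp add: falling_fact_def)

lemma falling_fact_Suc: "falling_fact x (Suc i) = falling_fact x i * (x - of_nat i)"
  by (simp add: falling_fact_def)

lemma falling_fact_Suc_shift: "falling_fact x (Suc i) = x * falling_fact (x - 1) i"
  unfolding falling_fact_def prod.lessThan_Suc_shift by (simp add: algebra_simps)

lemma falling_fact_of_nat_less: "c < i \<Longrightarrow> falling_fact (of_nat c :: 'a::comm_ring_1) i = 0"
  unfolding falling_fact_def by (rule prod_zero) auto

lemma falling_fact_of_nat_self: "falling_fact (of_nat i :: 'a::comm_ring_1) i = of_nat (fact i)"
  by (induction i) (simp_all add: falling_fact_Suc_shift algebra_simps)

lemma falling_fact_forward_diff:
  "falling_fact (x + 1) (Suc i) - falling_fact x (Suc i) = of_nat (Suc i) * falling_fact x i"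
proof -
  have "falling_fact (x + 1) (Suc i) = (x + 1) * falling_fact x i"
    by (simp add: falling_fact_Suc_shift)
  then show ?thesis by (simp add: falling_fact_Suc algebra_simps)
qed

definition sig_real :: "nat \<Rightarrow> real \<Rightarrow> real" where
  "sig_real k x = x * (real k - x) / 2"

lemma sig_eq_sig_real: "sig k i = sig_real k (real i)"
  by (simp add: sig_def sig_real_def)

definition birth_death_generator :: "nat \<Rightarrow> nat \<Rightarrow> (real \<Rightarrow> real) \<Rightarrow> real \<Rightarrow> real" where
  "birth_death_generator k j f x = sig_real k x * (f (x - 1) - f x) + sig_real k (real j + x) * (f (x + 1) - f x)"

definition eigval :: "nat \<Rightarrow> nat \<Rightarrow> real" where
  "eigval j r = - real (\<Sum>t\<in>{j..<j + r}. t)"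

lemma eigval_eq: "eigval j r = - (real r * (2 * real j + real r - 1) / 2)"
proof -
  have "real (\<Sum>t\<in>{j..<j + r}. t) = real r * (2 * real j + real r - 1) / 2"
    by (induction r) (simp_all add: field_simps)
  then show ?thesis by (simp add: eigval_def)
qed

lemma inj_eigval:
  assumes "1 \<le> j"
  shows "inj (eigval j)"
proof -
  have "strict_mono (\<lambda>r. - eigval j r)"
    unfolding strict_mono_Suc_iff using assms by (simp add: eigval_def)
  then have "inj (\<lambda>r. - eigval j r)"
    by (rule strict_mono_imp_inj_on)
  then show ?thesis
    by (simp add: inj_def)
qed

definition lowering_coeff :: "nat \<Rightarrow> nat \<Rightarrow> nat \<Rightarrow> real" where
  "lowering_coeff k j i = real i * (real j + real i - 1) * (real k - real j - real i + 1) / 2"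

lemma birth_death_generator_falling_fact:
  "birth_death_generator k j (\<lambda>y. falling_fact y i) x
     = eigval j i * falling_fact x i + (if 0 < i then lowering_coeff k j i * falling_fact x (i - 1) else 0)"
proof (cases i)
  case 0
  then show ?thesis by (simp add: birth_death_generator_def eigval_def)
next
  case (Suc m)
  have backward: "falling_fact (x - 1) (Suc m) - falling_fact x (Suc m) = - of_nat (Suc m) * falling_fact (x - 1) m"
    using falling_fact_forward_diff[of "x - 1" m] by (simp add: algebra_simps)
  have lowered: "sig_real k x * falling_fact (x - 1) m = (real k - x) * (x - real m) / 2 * falling_fact x m"
    using falling_fact_Suc[of x m] falling_fact_Suc_shift[of x m] by (simp add: sig_real_def)
  have "birth_death_generator k j (\<lambda>y. falling_fact y i) x
      = - real (Suc m) * (sig_real k x * falling_fact (x - 1) m) + real (Suc m) * sig_real k (real j + x) * falling_fact x m"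
    unfolding birth_death_generator_def Suc backward falling_fact_forward_diff by simp
  also have "\<dots> = eigval j i * falling_fact x i + lowering_coeff k j i * falling_fact x (i - 1)"
    unfolding lowered Suc by (simp add: sig_real_def eigval_eq lowering_coeff_def falling_fact_Suc field_simps)
  finally show ?thesis using Suc by simp
qed

lemma mult_Mkj:
  assumes A: "A \<in> carrier_mat m (k - j + 1)"
  shows "A * Mkj k j = mat m (k - j + 1) (\<lambda>(i, c).
      (if 0 < c then A $$ (i, c - 1) * sig k c else 0)
    + (if c + 1 < k - j + 1 then A $$ (i, c + 1) * sig k (j + c) else 0)
    - A $$ (i, c) * (sig k c + sig k (j + c)))"
    (is "_ = mat m ?n ?rhs")
proof (rule eq_matI)
  fix i c assume "i < dim_row (mat m ?n ?rhs)" and "c < dim_col (mat m ?n ?rhs)"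
  then have i: "i < m" and c: "c < ?n" by auto
  have "(A * Mkj k j) $$ (i, c) = (\<Sum>r<?n. A $$ (i, r) * Mkj k j $$ (r, c))"
    using A i c by (simp add: Mkj_def scalar_prod_def lessThan_atLeast0)
  also have "\<dots> = (\<Sum>r<?n. (if r = c - 1 then if 0 < c then A $$ (i, r) * sig k c else 0 else 0)
                + (if r = c + 1 then A $$ (i, r) * sig k (j + c) else 0)
                - (if r = c then A $$ (i, r) * (sig k c + sig k (j + c)) else 0))"
    using c by (intro sum.cong) (auto simp: Mkj_def algebra_simps)
  also have "\<dots> = ?rhs (i, c)"
    unfolding sum_subtractf sum.distrib sum.delta[OF finite_lessThan] using c by auto
  finally show "(A * Mkj k j) $$ (i, c) = mat m ?n ?rhs $$ (i, c)"
    using i c by simp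
qed (use A in \<open>auto simp: Mkj_def\<close>)

definition falling_fact_mat :: "nat \<Rightarrow> real mat" where
  "falling_fact_mat n = mat n n (\<lambda>(i, c). falling_fact (real c) i)"

lemma falling_fact_mat_carrier [simp]: "falling_fact_mat n \<in> carrier_mat n n"
  by (simp add: falling_fact_mat_def)

lemma det_falling_fact_mat: "det (falling_fact_mat n) = (\<Prod>i<n. fact i)"
proof -
  have "det (falling_fact_mat n) = prod_list (diag_mat (falling_fact_mat n))"
    by (rule det_upper_triangular[of _ n])
       (auto simp: upper_triangular_def falling_fact_mat_def falling_fact_of_nat_less)
  also have "diag_mat (falling_fact_mat n) = map fact [0..<n]"
    by (auto simp: diag_mat_def falling_fact_mat_def falling_fact_of_nat_self)
  also have "prod_list (map fact [0..<n]) = (\<Prod>i<n. fact i :: real)"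
    by (induction n) simp_all
  finally show ?thesis .
qed

lemma falling_fact_mat_mult_Mkj:
  assumes "j \<le> k"
  shows "falling_fact_mat (k - j + 1) * Mkj k j
    = lower_bidiag_mat (k - j + 1) (eigval j) (lowering_coeff k j) * falling_fact_mat (k - j + 1)"
    (is "?F * _ = ?T * ?F")
proof (rule eq_matI)
  let ?n = "k - j + 1"
  fix i c assume "i < dim_row (?T * ?F)" and "c < dim_col (?T * ?F)"
  then have i: "i < ?n" and c: "c < ?n"
    by (auto simp: falling_fact_mat_def lower_bidiag_mat_def)
  have "(?F * Mkj k j) $$ (i, c)
      = (if 0 < c then falling_fact (real (c - 1)) i * sig k c else 0)
      + (if c + 1 < ?n then falling_fact (real (c + 1)) i * sig k (j + c) else 0)
      - falling_fact (real c) i * (sig k c + sig k (j + c))"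
    unfolding mult_Mkj[OF falling_fact_mat_carrier] using i c by (simp add: falling_fact_mat_def)
  also have "\<dots> = birth_death_generator k j (\<lambda>y. falling_fact y i) (real c)"
  proof -
    have "j + c = k" if "\<not> c + 1 < ?n"
      using c that assms by simp
    then have "sig k (j + c) = 0" if "\<not> c + 1 < ?n"
      using that by (simp add: sig_def)
    moreover have "sig k c = 0" if "c = 0"
      using that by (simp add: sig_def)
    ultimately show ?thesis
      by (auto simp: birth_death_generator_def sig_eq_sig_real algebra_simps)
  qed
  also have "\<dots> = eigval j i * falling_fact (real c) i
      + (if 0 < i then lowering_coeff k j i * falling_fact (real c) (i - 1) else 0)"
    by (rule birth_death_generator_falling_fact)
  also have "\<dots> = (?T * ?F) $$ (i, c)"
    unfolding lower_bidiag_mat_mult[OF falling_fact_mat_carrier] using i c by (simp add: falling_fact_mat_def)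
  finally show "(?F * Mkj k j) $$ (i, c) = (?T * ?F) $$ (i, c)" .
qed (simp_all add: falling_fact_mat_def Mkj_def lower_bidiag_mat_def)

theorem lemmaC1:
  fixes k j :: nat
  assumes "k \<ge> 2" and "1 \<le> j" and "j \<le> k"
  shows "similar_mat (Mkj k j) (Dkj k j)"
proof -
  let ?n = "k - j + 1"
  let ?T = "lower_bidiag_mat ?n (eigval j) (lowering_coeff k j)"
  have "similar_mat (Mkj k j) ?T"
    by (rule similar_mat_if_intertwined[OF falling_fact_mat_carrier _ _ _ falling_fact_mat_mult_Mkj])
       (use assms in \<open>auto simp: Mkj_def det_falling_fact_mat\<close>)
  moreover have "similar_mat ?T (mat_diag ?n (eigval j))"
    by (intro similar_mat_lower_bidiag_mat_diag inj_on_subset[OF inj_eigval[OF assms(2)]]) simp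
  moreover have "mat_diag ?n (eigval j) = Dkj k j"
    by (rule eq_matI) (auto simp: mat_diag_def Dkj_def eigval_def)
  ultimately show ?thesis
    by (metis similar_mat_trans)
qed

end
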